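(* Let $G=(V,(c_{xy})_{x,y\in V})$ be a connected weighted finite graph and $\alpha=(\alpha_x)_{x\in V}$ positive site-weights with $\min_{x\in V}\alpha_x\ge 1$. Then $\mathrm{gap}_{\rm SIP}(G,\alpha)=\mathrm{gap}_{\rm RW}(G,\alpha)$.
   Context: $G$ is a finite graph on vertex set $V$ with symmetric non-negative edge weights $c_{xy}=c_{yx}\ge0$, connected. For $k\in\mathbb N$, $\Xi_k:=\{\eta\in\mathbb N_0^V:\sum_x\eta_x=k\}$, and $\eta-\delta_x+\delta_y$ denotes moving one particle from $x$ to $y$. ${\rm SIP}_k(G,\alpha)$ is the Markov chain on $\Xi_k$ with generator $L_kf(\eta)=\sum_{x}\eta_x\sum_{y}c_{xy}(\alpha_y+\eta_y)(f(\eta-\delta_x+\delta_y)-f(\eta))$, reversible w.r.t. the probability measure $\mu_{\alpha,k}(\eta)\propto\prod_x\frac{\Gamma(\alpha_x+\eta_x)}{\Gamma(\alpha_x)\eta_x!}$; $\mathrm{gap}_k(G,\alpha)$ is the smallest nonzero eigenvalue of $-L_k$. $\mathrm{gap}_{\rm RW}(G,\alpha):=\mathrm{gap}_1(G,\alpha)$, which is the spectral gap of the random walk on $V$ with generator $A_\alpha f(x)=\sum_y c_{xy}\alpha_y(f(y)-f(x))$, and $\mathrm{gap}_{\rm SIP}(G,\alpha):=\inf_{k\ge2}\mathrm{gap}_k(G,\alpha)$. *)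

theory Defs
  imports Complex_Main
begin

definition weighted_graph :: "('v::finite \<Rightarrow> 'v \<Rightarrow> real) \<Rightarrow> bool" where
  "weighted_graph c \<longleftrightarrow> (\<forall>x y. c x y = c y x) \<and> (\<forall>x y. 0 \<le> c x y)"

definition graph_connected :: "('v::finite \<Rightarrow> 'v \<Rightarrow> real) \<Rightarrow> bool" where
  "graph_connected c \<longleftrightarrow> (\<forall>x y. (x, y) \<in> {(a, b). 0 < c a b}\<^sup>*)"

definition Xi :: "nat \<Rightarrow> ('v::finite \<Rightarrow> nat) set" where
  "Xi k = {\<eta>. (\<Sum>x\<in>UNIV. \<eta> x) = k}"

definition move :: "('v \<Rightarrow> nat) \<Rightarrow> 'v \<Rightarrow> 'v \<Rightarrow> ('v \<Rightarrow> nat)" where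
  "move \<eta> x y = (\<eta>(x := \<eta> x - 1))(y := (\<eta>(x := \<eta> x - 1)) y + 1)"

text \<open>Generator of SIP (same formula for every k; evaluated on configurations in Xi k).\<close>
definition SIP_gen :: "('v::finite \<Rightarrow> 'v \<Rightarrow> real) \<Rightarrow> ('v \<Rightarrow> real)
    \<Rightarrow> (('v \<Rightarrow> nat) \<Rightarrow> real) \<Rightarrow> ('v \<Rightarrow> nat) \<Rightarrow> real" where
  "SIP_gen c \<alpha> f \<eta> =
     (\<Sum>x\<in>UNIV. real (\<eta> x) * (\<Sum>y\<in>UNIV. c x y * (\<alpha> y + real (\<eta> y)) * (f (move \<eta> x y) - f \<eta>)))"

definition SIP_eigenvalue :: "('v::finite \<Rightarrow> 'v \<Rightarrow> real) \<Rightarrow> ('v \<Rightarrow> real) \<Rightarrow> nat \<Rightarrow> real \<Rightarrow> bool" where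
  "SIP_eigenvalue c \<alpha> k lam \<longleftrightarrow>
     (\<exists>f. (\<exists>\<eta>\<in>Xi k. f \<eta> \<noteq> 0) \<and> (\<forall>\<eta>\<in>Xi k. - SIP_gen c \<alpha> f \<eta> = lam * f \<eta>))"

definition gap :: "('v::finite \<Rightarrow> 'v \<Rightarrow> real) \<Rightarrow> ('v \<Rightarrow> real) \<Rightarrow> nat \<Rightarrow> real" where
  "gap c \<alpha> k = Inf {lam. lam \<noteq> 0 \<and> SIP_eigenvalue c \<alpha> k lam}"

definition gap_RW :: "('v::finite \<Rightarrow> 'v \<Rightarrow> real) \<Rightarrow> ('v \<Rightarrow> real) \<Rightarrow> real" where
  "gap_RW c \<alpha> = gap c \<alpha> 1"

definition gap_SIP :: "('v::finite \<Rightarrow> 'v \<Rightarrow> real) \<Rightarrow> ('v \<Rightarrow> real) \<Rightarrow> real" where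
  "gap_SIP c \<alpha> = (INF k\<in>{2..}. gap c \<alpha> k)"

end

theory Submission
  imports Defs "HOL-Analysis.Analysis"
begin

(* If f is an eigenfunction of the random walk, the linear observable eta |-> sum_x eta_x f(x) is
   an eigenfunction of every L_k with the same eigenvalue, because the two-particle terms cancel by
   symmetry of c; so every gap_k is at most the random-walk gap q. Conversely, q minimises the
   Rayleigh quotient and hence satisfies a Poincare inequality. The map
   (Pi G)(xi) = sum_a (alpha_a + xi_a) G(xi + delta_a) intertwines L_(j+1) with L_j, so an
   eigenfunction G of -L_(j+1) is either sent to an eigenfunction of -L_j with the same eigenvalue,
   and induction on the number of particles applies, or killed by Pi. In the latter case every
   x |-> G(xi + delta_x) is centred for the site weights alpha + xi <= (j + 1) alpha (this is where
   min alpha >= 1 enters), and decomposing the norm and the Dirichlet form of G according to the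
   position of one particle turns the Poincare inequalities for these weights into lambda >= q. *)

section \<open>Particle configurations\<close>

definition add_particle :: "('v \<Rightarrow> nat) \<Rightarrow> 'v \<Rightarrow> ('v \<Rightarrow> nat)" where
  "add_particle \<eta> a = \<eta>(a := Suc (\<eta> a))"

lemma of_nat_add_particle:
  "real (add_particle \<eta> a z) = real (\<eta> z) + (if z = a then 1 else 0)"
  unfolding add_particle_def by auto

lemma of_nat_move:
  "1 \<le> \<eta> x \<Longrightarrow> real (move \<eta> x y z) = real (\<eta> z) - (if z = x then 1 else 0) + (if z = y then 1 else 0)"
  unfolding move_def by (auto simp: of_nat_diff)

lemma move_self: "1 \<le> \<eta> x \<Longrightarrow> move \<eta> x x = \<eta>"
  unfolding move_def by (auto simp: fun_eq_iff)

lemma move_add_particle: "1 \<le> \<xi> x \<Longrightarrow> move (add_particle \<xi> a) x y = add_particle (move \<xi> x y) a"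
  unfolding move_def add_particle_def by (auto simp: fun_eq_iff)

lemma move_add_particle_same: "move (add_particle \<xi> a) a y = add_particle \<xi> y"
  unfolding move_def add_particle_def by (auto simp: fun_eq_iff)

lemma add_particle_move_same: "1 \<le> \<xi> x \<Longrightarrow> add_particle (move \<xi> x y) x = add_particle \<xi> y"
  unfolding move_def add_particle_def by (auto simp: fun_eq_iff)

lemma sum_fun_upd_UNIV:
  fixes \<eta> :: "'v::finite \<Rightarrow> 'a::comm_monoid_add"
  shows "sum (\<eta>(a := v)) UNIV + \<eta> a = sum \<eta> UNIV + v"
proof -
  have "sum (\<eta>(a := v)) UNIV = v + sum \<eta> (UNIV - {a})"
    by (subst sum.remove[of _ a]) (auto intro!: sum.cong)
  moreover have "sum \<eta> UNIV = \<eta> a + sum \<eta> (UNIV - {a})"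
    by (subst sum.remove[of _ a]) auto
  ultimately show ?thesis by (simp add: ac_simps)
qed

lemma Xi_le: "\<eta> \<in> Xi k \<Longrightarrow> \<eta> (x::'v::finite) \<le> k"
  unfolding Xi_def using member_le_sum[of x UNIV \<eta>] by auto

lemma finite_Xi: "finite (Xi k :: ('v::finite \<Rightarrow> nat) set)"
proof (rule finite_subset)
  show "Xi k \<subseteq> PiE (UNIV::'v set) (\<lambda>_. {..k})"
    using Xi_le by (auto simp: PiE_iff)
qed (intro finite_PiE, auto)

lemma add_particle_in_Xi: "\<xi> \<in> Xi j \<Longrightarrow> add_particle \<xi> (a::'v::finite) \<in> Xi (Suc j)"
  unfolding Xi_def add_particle_def using sum_fun_upd_UNIV[of \<xi> a "Suc (\<xi> a)"] by auto

lemma single_site_in_Xi: "(\<lambda>_. 0)(x := k) \<in> Xi k"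
  unfolding Xi_def using sum_fun_upd_UNIV[of "\<lambda>_. 0::nat" x k] by simp

lemma image_add_particle_Xi:
  "(\<lambda>\<xi>. add_particle \<xi> (x::'v::finite)) ` Xi j = {\<eta> \<in> Xi (Suc j). \<eta> x \<noteq> 0}"
proof (intro equalityI subsetI)
  fix \<eta> assume "\<eta> \<in> (\<lambda>\<xi>. add_particle \<xi> x) ` Xi j"
  then show "\<eta> \<in> {\<eta> \<in> Xi (Suc j). \<eta> x \<noteq> 0}"
    using add_particle_in_Xi by (auto simp: add_particle_def)
next
  fix \<eta> assume \<eta>: "\<eta> \<in> {\<eta> \<in> Xi (Suc j). \<eta> x \<noteq> 0}"
  define \<xi> where "\<xi> = \<eta>(x := \<eta> x - 1)"
  have "\<eta> = add_particle \<xi> x"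
    using \<eta> by (auto simp: \<xi>_def add_particle_def fun_eq_iff)
  moreover have "\<xi> \<in> Xi j"
    using \<eta> sum_fun_upd_UNIV[of \<eta> x "\<eta> x - 1"] by (auto simp: Xi_def \<xi>_def)
  ultimately show "\<eta> \<in> (\<lambda>\<xi>. add_particle \<xi> x) ` Xi j" by blast
qed

lemma sum_Xi_Suc_particles:
  fixes F :: "('v::finite \<Rightarrow> nat) \<Rightarrow> 'v \<Rightarrow> real"
  shows "(\<Sum>\<eta>\<in>Xi (Suc j). \<Sum>x\<in>UNIV. real (\<eta> x) * F \<eta> x)
       = (\<Sum>\<xi>\<in>Xi j. \<Sum>x\<in>UNIV. real (Suc (\<xi> x)) * F (add_particle \<xi> x) x)"
proof -
  have site: "(\<Sum>\<eta>\<in>Xi (Suc j). real (\<eta> x) * F \<eta> x)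
      = (\<Sum>\<xi>\<in>Xi j. real (Suc (\<xi> x)) * F (add_particle \<xi> x) x)" for x
  proof -
    have "(\<Sum>\<eta>\<in>Xi (Suc j). real (\<eta> x) * F \<eta> x)
        = (\<Sum>\<eta>\<in>{\<eta> \<in> Xi (Suc j). \<eta> x \<noteq> 0}. real (\<eta> x) * F \<eta> x)"
      by (rule sum.mono_neutral_right[OF finite_Xi]) auto
    also have "\<dots> = (\<Sum>\<xi>\<in>Xi j. real (Suc (\<xi> x)) * F (add_particle \<xi> x) x)"
      unfolding image_add_particle_Xi[symmetric]
      by (subst sum.reindex) (auto simp: inj_on_def add_particle_def fun_eq_iff)
    finally show ?thesis .
  qed
  show ?thesis
    by (subst (1 2) sum.swap) (simp only: site)
qed

section \<open>Dirichlet forms and the random-walk gap\<close>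

lemma sum_sum_symmetric_diff:
  fixes K :: "'v::finite \<Rightarrow> 'v \<Rightarrow> real"
  assumes "\<And>x y. K x y = K y x"
  shows "(\<Sum>x\<in>UNIV. \<Sum>y\<in>UNIV. K x y * (h y - h x)) = 0"
proof -
  have "(\<Sum>x\<in>UNIV. \<Sum>y\<in>UNIV. K x y * h y) = (\<Sum>y\<in>UNIV. \<Sum>x\<in>UNIV. K x y * h y)"
    by (rule sum.swap)
  also have "\<dots> = (\<Sum>x\<in>UNIV. \<Sum>y\<in>UNIV. K x y * h x)"
    using assms by simp
  finally show ?thesis by (simp add: right_diff_distrib sum_subtractf)
qed

lemma sum_sum_symmetric_polarization:
  fixes K :: "'v::finite \<Rightarrow> 'v \<Rightarrow> real"
  assumes "\<And>x y. K x y = K y x"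
  shows "(\<Sum>x\<in>UNIV. \<Sum>y\<in>UNIV. K x y * ((f y - f x) * (h y - h x)))
       = - 2 * (\<Sum>x\<in>UNIV. \<Sum>y\<in>UNIV. K x y * h x * (f y - f x))"
proof -
  have "(\<Sum>x\<in>UNIV. \<Sum>y\<in>UNIV. K x y * h y * (f y - f x)) = (\<Sum>y\<in>UNIV. \<Sum>x\<in>UNIV. K x y * h y * (f y - f x))"
    by (rule sum.swap)
  also have "\<dots> = (\<Sum>x\<in>UNIV. \<Sum>y\<in>UNIV. - (K x y * h x * (f y - f x)))"
    by (intro sum.cong refl) (simp add: assms algebra_simps)
  finally have swap: "(\<Sum>x\<in>UNIV. \<Sum>y\<in>UNIV. K x y * h y * (f y - f x))
      = - (\<Sum>x\<in>UNIV. \<Sum>y\<in>UNIV. K x y * h x * (f y - f x))"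
    by (simp only: sum_negf)
  have "(\<Sum>x\<in>UNIV. \<Sum>y\<in>UNIV. K x y * ((f y - f x) * (h y - h x)))
      = (\<Sum>x\<in>UNIV. \<Sum>y\<in>UNIV. K x y * h y * (f y - f x)) - (\<Sum>x\<in>UNIV. \<Sum>y\<in>UNIV. K x y * h x * (f y - f x))"
    by (simp add: algebra_simps flip: sum_subtractf)
  then show ?thesis unfolding swap by simp
qed

definition weighted_sum :: "('v::finite \<Rightarrow> real) \<Rightarrow> ('v \<Rightarrow> real) \<Rightarrow> real" where
  "weighted_sum b h = (\<Sum>x\<in>UNIV. b x * h x)"

definition weighted_norm2 :: "('v::finite \<Rightarrow> real) \<Rightarrow> ('v \<Rightarrow> real) \<Rightarrow> real" where
  "weighted_norm2 b h = (\<Sum>x\<in>UNIV. b x * (h x)\<^sup>2)"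

definition dirichlet_form :: "('v::finite \<Rightarrow> 'v \<Rightarrow> real) \<Rightarrow> ('v \<Rightarrow> real) \<Rightarrow> ('v \<Rightarrow> real) \<Rightarrow> real" where
  "dirichlet_form c b h = (\<Sum>x\<in>UNIV. \<Sum>y\<in>UNIV. b x * b y * c x y * (h y - h x)\<^sup>2) / 2"

definition RW_gen :: "('v::finite \<Rightarrow> 'v \<Rightarrow> real) \<Rightarrow> ('v \<Rightarrow> real) \<Rightarrow> ('v \<Rightarrow> real) \<Rightarrow> 'v \<Rightarrow> real" where
  "RW_gen c \<alpha> f x = (\<Sum>y\<in>UNIV. c x y * \<alpha> y * (f y - f x))"

lemma weighted_sum_add_scaled:
  "weighted_sum b (\<lambda>x. f x + t * h x) = weighted_sum b f + t * weighted_sum b h"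
  unfolding weighted_sum_def sum_distrib_left by (simp add: distrib_left sum.distrib mult_ac)

lemma weighted_sum_scale: "weighted_sum b (\<lambda>x. r * h x) = r * weighted_sum b h"
  using weighted_sum_add_scaled[of b "\<lambda>_. 0" r h] by (simp add: weighted_sum_def)

lemma weighted_norm2_nonneg: "(\<And>x. 0 \<le> b x) \<Longrightarrow> 0 \<le> weighted_norm2 b h"
  unfolding weighted_norm2_def by (intro sum_nonneg) auto

lemma weighted_norm2_add_scaled:
  "weighted_norm2 b (\<lambda>x. f x + t * h x)
     = weighted_norm2 b f + t * (2 * (\<Sum>x\<in>UNIV. b x * f x * h x)) + t\<^sup>2 * weighted_norm2 b h"
proof -
  have "weighted_norm2 b (\<lambda>x. f x + t * h x)
      = (\<Sum>x\<in>UNIV. b x * (f x)\<^sup>2 + t * (2 * (b x * f x * h x)) + t\<^sup>2 * (b x * (h x)\<^sup>2))"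
    unfolding weighted_norm2_def by (intro sum.cong refl) (simp add: power2_eq_square algebra_simps)
  then show ?thesis
    unfolding weighted_norm2_def by (simp only: sum.distrib sum_distrib_left[symmetric])
qed

lemma weighted_norm2_scale: "weighted_norm2 b (\<lambda>x. r * h x) = r\<^sup>2 * weighted_norm2 b h"
  using weighted_norm2_add_scaled[of b "\<lambda>_. 0" r h] by (simp add: weighted_norm2_def)

lemma weighted_norm2_eq_0_iff:
  assumes "\<And>x. 0 < b x"
  shows "weighted_norm2 b h = 0 \<longleftrightarrow> (\<forall>x. h x = 0)"
proof -
  have "0 \<le> b x * (h x)\<^sup>2" and "b x \<noteq> 0" for x
    using assms[of x] by auto
  then show ?thesis
    unfolding weighted_norm2_def by (simp add: sum_nonneg_eq_0_iff)
qed

lemma weighted_norm2_pos: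
  assumes "\<And>x. 0 < b x" and "h x \<noteq> 0"
  shows "0 < weighted_norm2 b h"
proof -
  have "0 \<le> weighted_norm2 b h"
    using assms(1) by (simp add: weighted_norm2_nonneg less_imp_le)
  moreover have "weighted_norm2 b h \<noteq> 0"
    using assms(2) by (auto simp: weighted_norm2_eq_0_iff[of b, OF assms(1)])
  ultimately show ?thesis
    by simp
qed

lemma weighted_norm2_le_shift:
  assumes "\<And>x. 0 \<le> b x" and "weighted_sum b h = 0"
  shows "weighted_norm2 b h \<le> weighted_norm2 b (\<lambda>x. h x + m)"
proof -
  have "weighted_norm2 b (\<lambda>x. h x + m * 1)
      = weighted_norm2 b h + m * (2 * weighted_sum b h) + m\<^sup>2 * weighted_norm2 b (\<lambda>_. 1)"
    unfolding weighted_norm2_add_scaled weighted_sum_def by simp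
  then show ?thesis
    using assms weighted_norm2_nonneg[of b "\<lambda>_. 1"] by simp
qed

lemma dirichlet_form_nonneg:
  assumes "\<And>x y. 0 \<le> c x y" and "\<And>x. 0 \<le> b x"
  shows "0 \<le> dirichlet_form c b h"
  unfolding dirichlet_form_def using assms by (intro divide_nonneg_pos sum_nonneg mult_nonneg_nonneg) auto

lemma dirichlet_form_shift: "dirichlet_form c b (\<lambda>x. h x + m) = dirichlet_form c b h"
  unfolding dirichlet_form_def by simp

lemma dirichlet_form_mono_weight:
  assumes "\<And>x y. 0 \<le> c x y" and "\<And>x. 0 \<le> a x" and "\<And>x. a x \<le> b x"
  shows "dirichlet_form c a h \<le> dirichlet_form c b h"
  unfolding dirichlet_form_def
proof (intro divide_right_mono sum_mono)
  fix x y
  have "a x * a y \<le> b x * b y"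
    using assms(2,3) by (intro mult_mono) (auto intro: order_trans)
  then show "a x * a y * c x y * (h y - h x)\<^sup>2 \<le> b x * b y * c x y * (h y - h x)\<^sup>2"
    using assms(1) by (intro mult_right_mono) auto
qed simp

lemma dirichlet_form_eq_neg_sum:
  assumes "\<And>x y. c x y = c y x"
  shows "dirichlet_form c b h = - (\<Sum>x\<in>UNIV. \<Sum>y\<in>UNIV. b x * b y * c x y * h x * (h y - h x))"
proof -
  have "(\<Sum>x\<in>UNIV. \<Sum>y\<in>UNIV. b x * b y * c x y * ((h y - h x) * (h y - h x)))
      = - 2 * (\<Sum>x\<in>UNIV. \<Sum>y\<in>UNIV. b x * b y * c x y * h x * (h y - h x))"
    by (rule sum_sum_symmetric_polarization) (simp add: assms mult_ac)
  then show ?thesis unfolding dirichlet_form_def power2_eq_square by simp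
qed

lemma dirichlet_form_add_scaled:
  assumes "\<And>x y. c x y = c y x"
  shows "dirichlet_form c b (\<lambda>x. f x + t * h x)
    = dirichlet_form c b f - 2 * t * (\<Sum>x\<in>UNIV. b x * h x * (\<Sum>y\<in>UNIV. c x y * b y * (f y - f x)))
      + t\<^sup>2 * dirichlet_form c b h"
proof -
  define K where "K x y = b x * b y * c x y" for x y
  have "dirichlet_form c b (\<lambda>x. f x + t * h x)
      = (\<Sum>x\<in>UNIV. \<Sum>y\<in>UNIV. K x y * (f y - f x)\<^sup>2 + (2 * t) * (K x y * ((f y - f x) * (h y - h x)))
          + t\<^sup>2 * (K x y * (h y - h x)\<^sup>2)) / 2"
    unfolding dirichlet_form_def K_def
    by (intro arg_cong[where f="\<lambda>z. z / 2"] sum.cong refl) (simp add: power2_eq_square algebra_simps)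
  also have "\<dots> = dirichlet_form c b f + t * (\<Sum>x\<in>UNIV. \<Sum>y\<in>UNIV. K x y * ((f y - f x) * (h y - h x)))
      + t\<^sup>2 * dirichlet_form c b h"
    unfolding dirichlet_form_def K_def sum.distrib sum_distrib_left[symmetric]
    by (simp add: add_divide_distrib)
  also have "(\<Sum>x\<in>UNIV. \<Sum>y\<in>UNIV. K x y * ((f y - f x) * (h y - h x)))
      = - 2 * (\<Sum>x\<in>UNIV. \<Sum>y\<in>UNIV. K x y * h x * (f y - f x))"
    by (rule sum_sum_symmetric_polarization) (simp add: K_def assms mult_ac)
  also have "(\<Sum>x\<in>UNIV. \<Sum>y\<in>UNIV. K x y * h x * (f y - f x))
      = (\<Sum>x\<in>UNIV. b x * h x * (\<Sum>y\<in>UNIV. c x y * b y * (f y - f x)))"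
    unfolding K_def sum_distrib_left by (intro sum.cong refl) (simp only: mult_ac)
  finally show ?thesis by simp
qed

lemma dirichlet_form_scale: "dirichlet_form c b (\<lambda>x. r * h x) = r\<^sup>2 * dirichlet_form c b h"
proof -
  have "(\<Sum>x\<in>UNIV. \<Sum>y\<in>UNIV. b x * b y * c x y * (r * h y - r * h x)\<^sup>2)
      = (\<Sum>x\<in>UNIV. \<Sum>y\<in>UNIV. r\<^sup>2 * (b x * b y * c x y * (h y - h x)\<^sup>2))"
    by (intro sum.cong refl) (simp add: power2_eq_square algebra_simps)
  then show ?thesis unfolding dirichlet_form_def by (simp only: sum_distrib_left[symmetric])
qed

lemma weighted_sum_RW_gen:
  assumes "\<And>x y. c x y = c y x"
  shows "weighted_sum \<alpha> (RW_gen c \<alpha> f) = 0"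
proof -
  have "weighted_sum \<alpha> (RW_gen c \<alpha> f) = (\<Sum>x\<in>UNIV. \<Sum>y\<in>UNIV. (\<alpha> x * \<alpha> y * c x y) * (f y - f x))"
    unfolding weighted_sum_def RW_gen_def sum_distrib_left by (intro sum.cong refl) (simp only: mult_ac)
  also have "\<dots> = 0"
    by (rule sum_sum_symmetric_diff) (simp add: assms mult_ac)
  finally show ?thesis .
qed

lemma dirichlet_form_eq_0_imp_const:
  assumes "weighted_graph c" and "graph_connected c" and "\<And>x. 0 < b x"
    and "dirichlet_form c b f = 0"
  shows "f x = f y"
proof -
  have terms_nonneg: "0 \<le> b x * b y * c x y * (f y - f x)\<^sup>2" for x y
    using assms(1) assms(3)[of x] assms(3)[of y] by (simp add: weighted_graph_def)
  have edge: "f u = f v" if "0 < c u v" for u v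
  proof -
    have "(\<Sum>x\<in>UNIV. \<Sum>y\<in>UNIV. b x * b y * c x y * (f y - f x)\<^sup>2) = 0"
      using assms(4) by (simp add: dirichlet_form_def)
    then have "(\<Sum>y\<in>UNIV. b u * b y * c u y * (f y - f u)\<^sup>2) = 0"
      by (subst (asm) sum_nonneg_eq_0_iff) (auto intro: sum_nonneg terms_nonneg)
    then have "b u * b v * c u v * (f v - f u)\<^sup>2 = 0"
      by (subst (asm) sum_nonneg_eq_0_iff) (auto intro: terms_nonneg)
    then show ?thesis
      using that assms(3)[of u] assms(3)[of v] by simp
  qed
  have "(x, y) \<in> {(u, v). 0 < c u v}\<^sup>*"
    using assms(2) by (simp add: graph_connected_def)
  then show ?thesis
  proof (induction rule: rtrancl_induct)
    case (step y z)
    then show ?case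
      using edge[of y z] by simp
  qed simp
qed

lemma compact_weighted_unit_sphere_centred:
  fixes \<alpha> :: "'v::finite \<Rightarrow> real"
  assumes "\<And>x. 0 < \<alpha> x"
  shows "compact {v :: real^'v. weighted_norm2 \<alpha> (($) v) = 1 \<and> weighted_sum \<alpha> (($) v) = 0}"
    (is "compact ?T")
proof -
  have "closed ?T"
    unfolding weighted_norm2_def weighted_sum_def
    by (intro closed_Collect_conj closed_Collect_eq continuous_intros)
  moreover have "bounded ?T"
    unfolding bounded_iff
  proof (intro exI ballI)
    fix v assume "v \<in> ?T"
    have "\<bar>v $ i\<bar> \<le> 1 + 1 / \<alpha> i" for i
    proof (cases "\<bar>v $ i\<bar> \<le> 1")
      case False
      have "\<bar>v $ i\<bar> * 1 \<le> \<bar>v $ i\<bar> * \<bar>v $ i\<bar>"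
        using False by (intro mult_left_mono) auto
      then have "\<alpha> i * \<bar>v $ i\<bar> \<le> \<alpha> i * (v $ i)\<^sup>2"
        using assms[of i] by (simp add: power2_eq_square)
      also have "\<dots> \<le> weighted_norm2 \<alpha> (($) v)"
        unfolding weighted_norm2_def using assms
        by (intro member_le_sum[where f="\<lambda>x. \<alpha> x * (v $ x)\<^sup>2"]) (auto simp: less_imp_le)
      finally have "\<alpha> i * \<bar>v $ i\<bar> \<le> 1"
        using \<open>v \<in> ?T\<close> by simp
      then show ?thesis
        using assms[of i] by (simp add: field_simps)
    qed (use assms[of i] in \<open>auto intro!: add_increasing2\<close>)
    then have "(\<Sum>i\<in>UNIV. \<bar>v $ i\<bar>) \<le> (\<Sum>i\<in>UNIV. 1 + 1 / \<alpha> i)"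
      by (intro sum_mono)
    then show "norm v \<le> (\<Sum>i\<in>UNIV. 1 + 1 / \<alpha> i)"
      using norm_le_l1_cart[of v] by linarith
  qed
  ultimately show ?thesis
    by (simp add: compact_eq_bounded_closed)
qed

lemma exists_centred_nonzero:
  fixes \<alpha> :: "'v::finite \<Rightarrow> real"
  assumes apos: "\<And>x. 0 < \<alpha> x" and "a \<noteq> (b::'v)"
  obtains h where "weighted_sum \<alpha> h = 0" and "0 < weighted_norm2 \<alpha> h"
proof
  define h where "h x = (if x = a then 1 / \<alpha> a else 0) - (if x = b then 1 / \<alpha> b else 0)" for x
  have "weighted_sum \<alpha> h = (\<Sum>x\<in>UNIV. (if x = a then 1 else 0) - (if x = b then 1 else 0))"
    unfolding weighted_sum_def h_def using apos[of a] apos[of b]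
    by (intro sum.cong refl) (auto simp: field_simps)
  then show "weighted_sum \<alpha> h = 0"
    by (simp add: sum_subtractf)
  show "0 < weighted_norm2 \<alpha> h"
    using apos[of a] \<open>a \<noteq> b\<close> by (intro weighted_norm2_pos[of \<alpha> h a, OF apos]) (simp add: h_def)
qed

lemma rayleigh_minimizer_exists:
  fixes \<alpha> :: "'v::finite \<Rightarrow> real"
  assumes apos: "\<And>x. 0 < \<alpha> x" and "a \<noteq> (b::'v)"
  obtains f where "weighted_sum \<alpha> f = 0" and "weighted_norm2 \<alpha> f = 1"
    and "\<And>h. weighted_sum \<alpha> h = 0 \<Longrightarrow> dirichlet_form c \<alpha> f * weighted_norm2 \<alpha> h \<le> dirichlet_form c \<alpha> h"
proof -
  define T where "T = {v :: real^'v. weighted_norm2 \<alpha> (($) v) = 1 \<and> weighted_sum \<alpha> (($) v) = 0}"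
  have normalized_in_T: "(\<chi> x. h x / sqrt (weighted_norm2 \<alpha> h)) \<in> T"
    and dirichlet_normalized: "dirichlet_form c \<alpha> (($) (\<chi> x. h x / sqrt (weighted_norm2 \<alpha> h)))
        = dirichlet_form c \<alpha> h / weighted_norm2 \<alpha> h"
    if "weighted_sum \<alpha> h = 0" and "0 < weighted_norm2 \<alpha> h" for h
  proof -
    have scaled: "($) (\<chi> x. h x / sqrt (weighted_norm2 \<alpha> h)) = (\<lambda>x. (1 / sqrt (weighted_norm2 \<alpha> h)) * h x)"
      by auto
    show "(\<chi> x. h x / sqrt (weighted_norm2 \<alpha> h)) \<in> T"
      "dirichlet_form c \<alpha> (($) (\<chi> x. h x / sqrt (weighted_norm2 \<alpha> h))) = dirichlet_form c \<alpha> h / weighted_norm2 \<alpha> h"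
      unfolding T_def mem_Collect_eq scaled weighted_norm2_scale weighted_sum_scale dirichlet_form_scale
      using that by (simp_all add: power_divide)
  qed
  obtain h0 where "weighted_sum \<alpha> h0 = 0" and "0 < weighted_norm2 \<alpha> h0"
    using exists_centred_nonzero[of \<alpha>, OF apos \<open>a \<noteq> b\<close>] by blast
  then have "T \<noteq> {}"
    using normalized_in_T by blast
  have "compact T"
    unfolding T_def by (rule compact_weighted_unit_sphere_centred[of \<alpha>, OF apos])
  have "continuous_on T (\<lambda>v. dirichlet_form c \<alpha> (($) v))"
    unfolding dirichlet_form_def by (intro continuous_intros) simp
  then obtain v where "v \<in> T" and v_min: "\<And>u. u \<in> T \<Longrightarrow> dirichlet_form c \<alpha> (($) v) \<le> dirichlet_form c \<alpha> (($) u)"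
    using continuous_attains_inf[OF \<open>compact T\<close> \<open>T \<noteq> {}\<close>] by blast
  show ?thesis
  proof
    show "weighted_sum \<alpha> (($) v) = 0" "weighted_norm2 \<alpha> (($) v) = 1"
      using \<open>v \<in> T\<close> by (auto simp: T_def)
  next
    fix h assume "weighted_sum \<alpha> h = 0"
    show "dirichlet_form c \<alpha> (($) v) * weighted_norm2 \<alpha> h \<le> dirichlet_form c \<alpha> h"
    proof (cases "weighted_norm2 \<alpha> h = 0")
      case True
      then have "h = (\<lambda>_. 0)"
        using weighted_norm2_eq_0_iff[of \<alpha>, OF apos] by auto
      then show ?thesis
        by (simp add: dirichlet_form_def weighted_norm2_def)
    next
      case False
      then have "0 < weighted_norm2 \<alpha> h"
        using weighted_norm2_nonneg[of \<alpha> h, OF less_imp_le[OF apos]] by simp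
      then show ?thesis
        using v_min[OF normalized_in_T] dirichlet_normalized \<open>weighted_sum \<alpha> h = 0\<close>
        by (simp add: field_simps)
    qed
  qed
qed

lemma linear_coeff_eq_0_if_nonneg:
  fixes B C :: real
  assumes "\<And>t. 0 \<le> t * B + t\<^sup>2 * C"
  shows "B = 0"
proof -
  define \<epsilon> where "\<epsilon> = 1 / (\<bar>C\<bar> + 1)"
  have "0 < \<epsilon>" and "\<epsilon> * C < 1"
    unfolding \<epsilon>_def by (auto simp: field_simps)
  have "0 \<le> (- \<epsilon> * B) * B + (- \<epsilon> * B)\<^sup>2 * C"
    by (rule assms)
  also have "\<dots> = \<epsilon> * B\<^sup>2 * (\<epsilon> * C - 1)"
    by (simp add: power2_eq_square algebra_simps)
  finally have nonneg: "0 \<le> \<epsilon> * B\<^sup>2 * (\<epsilon> * C - 1)" .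
  show ?thesis
  proof (rule ccontr)
    assume "B \<noteq> 0"
    then have "\<epsilon> * B\<^sup>2 * (\<epsilon> * C - 1) < 0"
      using \<open>0 < \<epsilon>\<close> \<open>\<epsilon> * C < 1\<close> by (intro mult_pos_neg) auto
    then show False
      using nonneg by linarith
  qed
qed

lemma rayleigh_minimizer_eigenfunction:
  fixes \<alpha> :: "'v::finite \<Rightarrow> real"
  assumes csym: "\<And>x y. c x y = c y x" and apos: "\<And>x. 0 < \<alpha> x"
    and f_centred: "weighted_sum \<alpha> f = 0" and f_unit: "weighted_norm2 \<alpha> f = 1"
    and f_min: "\<And>h. weighted_sum \<alpha> h = 0 \<Longrightarrow> dirichlet_form c \<alpha> f * weighted_norm2 \<alpha> h \<le> dirichlet_form c \<alpha> h"
  shows "RW_gen c \<alpha> f x = - dirichlet_form c \<alpha> f * f x"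
proof -
  define q where "q = dirichlet_form c \<alpha> f"
  define E where "E x = RW_gen c \<alpha> f x + q * f x" for x
  have orthogonal: "(\<Sum>x\<in>UNIV. \<alpha> x * h x * E x) = 0" if h_centred: "weighted_sum \<alpha> h = 0" for h
  proof -
    define B where "B = (\<Sum>x\<in>UNIV. \<alpha> x * h x * RW_gen c \<alpha> f x)"
    define P where "P = (\<Sum>x\<in>UNIV. \<alpha> x * f x * h x)"
    have "0 \<le> t * (- 2 * (B + q * P)) + t\<^sup>2 * (dirichlet_form c \<alpha> h - q * weighted_norm2 \<alpha> h)" for t
    proof -
      have "weighted_sum \<alpha> (\<lambda>x. f x + t * h x) = 0"
        using f_centred h_centred by (simp add: weighted_sum_add_scaled)
      then have "q * weighted_norm2 \<alpha> (\<lambda>x. f x + t * h x) \<le> dirichlet_form c \<alpha> (\<lambda>x. f x + t * h x)"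
        unfolding q_def by (rule f_min)
      then show ?thesis
        unfolding weighted_norm2_add_scaled dirichlet_form_add_scaled[OF csym] f_unit
        unfolding q_def[symmetric] P_def B_def RW_gen_def
        by (simp add: algebra_simps)
    qed
    then have "- 2 * (B + q * P) = 0"
      by (rule linear_coeff_eq_0_if_nonneg)
    then have "B + q * P = 0"
      by (simp add: mult.commute)
    moreover have "(\<Sum>x\<in>UNIV. \<alpha> x * h x * E x) = B + q * P"
      unfolding E_def B_def P_def
      by (simp add: distrib_left sum.distrib sum_distrib_left mult_ac)
    ultimately show ?thesis
      by simp
  qed
  have "weighted_sum \<alpha> E = weighted_sum \<alpha> (RW_gen c \<alpha> f) + q * weighted_sum \<alpha> f"
    unfolding E_def by (simp add: weighted_sum_add_scaled)
  then have "weighted_sum \<alpha> E = 0"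
    using weighted_sum_RW_gen[OF csym] f_centred by simp
  then have "weighted_norm2 \<alpha> E = 0"
    using orthogonal[of E] by (simp add: weighted_norm2_def power2_eq_square mult_ac)
  then have "E x = 0"
    using weighted_norm2_eq_0_iff[of \<alpha>, OF apos] by blast
  then show ?thesis
    unfolding E_def q_def by simp
qed

lemma RW_spectral_gap:
  fixes c :: "'v::finite \<Rightarrow> 'v \<Rightarrow> real" and \<alpha> :: "'v \<Rightarrow> real"
  assumes graph: "weighted_graph c" and conn: "graph_connected c"
    and apos: "\<And>x. 0 < \<alpha> x" and "a \<noteq> (b::'v)"
  obtains q f x0 where "0 < q" and "f x0 \<noteq> 0" and "\<And>x. RW_gen c \<alpha> f x = - q * f x"
    and "\<And>h. weighted_sum \<alpha> h = 0 \<Longrightarrow> q * weighted_norm2 \<alpha> h \<le> dirichlet_form c \<alpha> h"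
proof -
  have csym: "\<And>x y. c x y = c y x" and cnn: "\<And>x y. 0 \<le> c x y"
    using graph by (auto simp: weighted_graph_def)
  obtain f where f_centred: "weighted_sum \<alpha> f = 0" and f_unit: "weighted_norm2 \<alpha> f = 1"
    and f_min: "\<And>h. weighted_sum \<alpha> h = 0 \<Longrightarrow> dirichlet_form c \<alpha> f * weighted_norm2 \<alpha> h \<le> dirichlet_form c \<alpha> h"
    using rayleigh_minimizer_exists[of \<alpha>, where c=c, OF apos \<open>a \<noteq> b\<close>] by blast
  have f_nonzero: "\<exists>x. f x \<noteq> 0"
    using f_unit weighted_norm2_eq_0_iff[of \<alpha>, OF apos, of f] by auto
  have "0 < dirichlet_form c \<alpha> f"
  proof (rule ccontr)
    assume "\<not> 0 < dirichlet_form c \<alpha> f"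
    moreover have "0 \<le> dirichlet_form c \<alpha> f"
      using cnn apos by (intro dirichlet_form_nonneg) (auto simp: less_imp_le)
    ultimately have "dirichlet_form c \<alpha> f = 0"
      by linarith
    then have const: "f x = f a" for x
      by (rule dirichlet_form_eq_0_imp_const[OF graph conn apos])
    have "weighted_sum \<alpha> f = (\<Sum>x\<in>UNIV. \<alpha> x) * f a"
      unfolding weighted_sum_def sum_distrib_right by (rule sum.cong[OF refl]) (metis const)
    moreover have "0 < (\<Sum>x\<in>UNIV. \<alpha> x)"
      using apos by (intro sum_pos) auto
    ultimately have "f a = 0"
      using f_centred by simp
    then show False
      using f_nonzero const by metis
  qed
  moreover obtain x0 where "f x0 \<noteq> 0"
    using f_nonzero by blast
  ultimately show ?thesis
    using that rayleigh_minimizer_eigenfunction[OF csym apos f_centred f_unit f_min] f_min by blast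
qed

section \<open>Eigenfunctions of the particle system\<close>

lemma linear_observable_move:
  fixes f :: "'v::finite \<Rightarrow> real"
  assumes "1 \<le> \<eta> x"
  shows "(\<Sum>z\<in>UNIV. real (move \<eta> x y z) * f z) = (\<Sum>z\<in>UNIV. real (\<eta> z) * f z) - f x + f y"
proof -
  have "(\<Sum>z\<in>UNIV. real (move \<eta> x y z) * f z)
      = (\<Sum>z\<in>UNIV. real (\<eta> z) * f z - (if z = x then f z else 0) + (if z = y then f z else 0))"
    using assms by (intro sum.cong refl) (auto simp: of_nat_move algebra_simps)
  then show ?thesis
    by (simp add: sum.distrib sum_subtractf)
qed

lemma SIP_gen_linear_observable:
  fixes c :: "'v::finite \<Rightarrow> 'v \<Rightarrow> real"
  assumes csym: "\<And>x y. c x y = c y x"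
  shows "SIP_gen c \<alpha> (\<lambda>\<eta>. \<Sum>z\<in>UNIV. real (\<eta> z) * f z) \<eta> = (\<Sum>x\<in>UNIV. real (\<eta> x) * RW_gen c \<alpha> f x)"
proof -
  have "SIP_gen c \<alpha> (\<lambda>\<eta>. \<Sum>z\<in>UNIV. real (\<eta> z) * f z) \<eta>
      = (\<Sum>x\<in>UNIV. real (\<eta> x) * (\<Sum>y\<in>UNIV. c x y * (\<alpha> y + real (\<eta> y)) * (f y - f x)))"
    unfolding SIP_gen_def
  proof (intro sum.cong refl)
    fix x
    show "real (\<eta> x) * (\<Sum>y\<in>UNIV. c x y * (\<alpha> y + real (\<eta> y)) * ((\<Sum>z\<in>UNIV. real (move \<eta> x y z) * f z) - (\<Sum>z\<in>UNIV. real (\<eta> z) * f z)))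
        = real (\<eta> x) * (\<Sum>y\<in>UNIV. c x y * (\<alpha> y + real (\<eta> y)) * (f y - f x))"
      by (cases "\<eta> x = 0") (simp_all add: linear_observable_move)
  qed
  also have "\<dots> = (\<Sum>x\<in>UNIV. real (\<eta> x) * RW_gen c \<alpha> f x
      + (\<Sum>y\<in>UNIV. (real (\<eta> x) * real (\<eta> y) * c x y) * (f y - f x)))"
    unfolding RW_gen_def
    by (intro sum.cong refl) (simp add: sum_distrib_left sum.distrib[symmetric] algebra_simps)
  also have "\<dots> = (\<Sum>x\<in>UNIV. real (\<eta> x) * RW_gen c \<alpha> f x)"
    using sum_sum_symmetric_diff[of "\<lambda>x y. real (\<eta> x) * real (\<eta> y) * c x y" f]
    by (simp add: sum.distrib csym mult_ac)
  finally show ?thesis .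
qed

lemma SIP_eigenvalue_of_RW_eigenfunction:
  fixes c :: "'v::finite \<Rightarrow> 'v \<Rightarrow> real"
  assumes csym: "\<And>x y. c x y = c y x" and "1 \<le> k"
    and "f x0 \<noteq> 0" and eigen: "\<And>x. RW_gen c \<alpha> f x = - q * f x"
  shows "SIP_eigenvalue c \<alpha> k q"
  unfolding SIP_eigenvalue_def
proof (intro exI conjI bexI ballI)
  define \<eta>0 where "\<eta>0 = (\<lambda>_::'v. 0::nat)(x0 := k)"
  show "\<eta>0 \<in> Xi k"
    unfolding \<eta>0_def by (rule single_site_in_Xi)
  have "(\<Sum>z\<in>UNIV. real (\<eta>0 z) * f z) = (\<Sum>z\<in>UNIV. if z = x0 then real k * f x0 else 0)"
    unfolding \<eta>0_def by (intro sum.cong refl) simp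
  then have "(\<Sum>z\<in>UNIV. real (\<eta>0 z) * f z) = real k * f x0"
    by simp
  then show "(\<Sum>z\<in>UNIV. real (\<eta>0 z) * f z) \<noteq> 0"
    using assms(2,3) by simp
  fix \<eta> :: "'v \<Rightarrow> nat"
  show "- SIP_gen c \<alpha> (\<lambda>\<eta>. \<Sum>z\<in>UNIV. real (\<eta> z) * f z) \<eta> = q * (\<Sum>z\<in>UNIV. real (\<eta> z) * f z)"
    unfolding SIP_gen_linear_observable[OF csym] eigen sum_distrib_left
    by (simp add: sum_negf[symmetric] mult_ac)
qed

text \<open>With respect to the weights \<open>sip_weight\<close> below, this is the adjoint of
  \<open>F \<mapsto> (\<lambda>\<eta>. \<Sum>\<^sub>a \<eta>\<^sub>a F(\<eta> - \<delta>\<^sub>a))\<close>, the operator that removes a particle.\<close>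
definition particle_intertwiner :: "('v::finite \<Rightarrow> real) \<Rightarrow> (('v \<Rightarrow> nat) \<Rightarrow> real) \<Rightarrow> ('v \<Rightarrow> nat) \<Rightarrow> real" where
  "particle_intertwiner \<alpha> g \<xi> = (\<Sum>a\<in>UNIV. (\<alpha> a + real (\<xi> a)) * g (add_particle \<xi> a))"

lemma particle_intertwiner_move:
  fixes \<alpha> :: "'v::finite \<Rightarrow> real"
  assumes "1 \<le> \<xi> x"
  shows "(\<Sum>a\<in>UNIV. (\<alpha> a + real (\<xi> a)) * (\<alpha> y + real (add_particle \<xi> a y))
            * (g (move (add_particle \<xi> a) x y) - g (add_particle \<xi> a)))
       = (\<alpha> y + real (\<xi> y)) * (particle_intertwiner \<alpha> g (move \<xi> x y) - particle_intertwiner \<alpha> g \<xi>)"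
proof -
  define \<xi>' where "\<xi>' = move \<xi> x y"
  define \<beta> where "\<beta> a = \<alpha> a + real (\<xi> a)" for a
  define D where "D a = g (add_particle \<xi>' a) - g (add_particle \<xi> a)" for a
  have "(\<Sum>a\<in>UNIV. (\<alpha> a + real (\<xi> a)) * (\<alpha> y + real (add_particle \<xi> a y))
            * (g (move (add_particle \<xi> a) x y) - g (add_particle \<xi> a)))
      = (\<Sum>a\<in>UNIV. \<beta> y * (\<beta> a * D a) + (if a = y then \<beta> a * D a else 0))"
    using assms
    by (intro sum.cong) (auto simp: move_add_particle of_nat_add_particle \<beta>_def D_def \<xi>'_def algebra_simps)
  also have "\<dots> = \<beta> y * (\<Sum>a\<in>UNIV. \<beta> a * D a) + \<beta> y * D y"
    by (simp add: sum.distrib sum_distrib_left)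
  also have "\<dots> = \<beta> y * (particle_intertwiner \<alpha> g \<xi>' - particle_intertwiner \<alpha> g \<xi>)"
  proof -
    have "particle_intertwiner \<alpha> g \<xi>'
        = (\<Sum>a\<in>UNIV. \<beta> a * g (add_particle \<xi>' a) - (if a = x then g (add_particle \<xi>' a) else 0)
            + (if a = y then g (add_particle \<xi>' a) else 0))"
      unfolding particle_intertwiner_def \<xi>'_def
      using assms by (intro sum.cong) (auto simp: of_nat_move \<beta>_def algebra_simps)
    also have "\<dots> = (\<Sum>a\<in>UNIV. \<beta> a * g (add_particle \<xi>' a)) - g (add_particle \<xi>' x) + g (add_particle \<xi>' y)"
      by (simp add: sum.distrib sum_subtractf)
    finally have moved: "particle_intertwiner \<alpha> g \<xi>'
        = (\<Sum>a\<in>UNIV. \<beta> a * g (add_particle \<xi>' a)) - g (add_particle \<xi> y) + g (add_particle \<xi>' y)"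
      using assms by (simp add: \<xi>'_def add_particle_move_same)
    have unmoved: "particle_intertwiner \<alpha> g \<xi> = (\<Sum>a\<in>UNIV. \<beta> a * g (add_particle \<xi> a))"
      unfolding particle_intertwiner_def \<beta>_def ..
    have D_sum: "(\<Sum>a\<in>UNIV. \<beta> a * D a)
        = (\<Sum>a\<in>UNIV. \<beta> a * g (add_particle \<xi>' a)) - (\<Sum>a\<in>UNIV. \<beta> a * g (add_particle \<xi> a))"
      unfolding D_def by (simp add: right_diff_distrib sum_subtractf)
    show ?thesis
      unfolding moved unmoved D_sum by (simp add: D_def algebra_simps)
  qed
  finally show ?thesis
    unfolding \<xi>'_def \<beta>_def .
qed

lemma SIP_gen_particle_intertwiner:
  fixes c :: "'v::finite \<Rightarrow> 'v \<Rightarrow> real" and \<alpha> :: "'v \<Rightarrow> real"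
  assumes csym: "\<And>x y. c x y = c y x"
  shows "SIP_gen c \<alpha> (particle_intertwiner \<alpha> g) \<xi>
       = (\<Sum>a\<in>UNIV. (\<alpha> a + real (\<xi> a)) * SIP_gen c \<alpha> g (add_particle \<xi> a))"
proof -
  define \<beta> where "\<beta> a = \<alpha> a + real (\<xi> a)" for a
  define I where "I a x = (\<Sum>y\<in>UNIV. c x y * (\<alpha> y + real (add_particle \<xi> a y))
      * (g (move (add_particle \<xi> a) x y) - g (add_particle \<xi> a)))" for a x
  have gen_add_particle: "SIP_gen c \<alpha> g (add_particle \<xi> a) = (\<Sum>x\<in>UNIV. real (\<xi> x) * I a x) + I a a" for a
  proof -
    have "SIP_gen c \<alpha> g (add_particle \<xi> a) = (\<Sum>x\<in>UNIV. real (\<xi> x) * I a x + (if x = a then I a x else 0))"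
      unfolding SIP_gen_def I_def by (intro sum.cong) (auto simp: of_nat_add_particle algebra_simps)
    then show ?thesis
      by (simp add: sum.distrib)
  qed
  have "(\<Sum>a\<in>UNIV. \<beta> a * I a a)
      = (\<Sum>a\<in>UNIV. \<Sum>y\<in>UNIV. (\<beta> a * \<beta> y * c a y) * (g (add_particle \<xi> y) - g (add_particle \<xi> a)))"
    unfolding I_def sum_distrib_left
    by (intro sum.cong refl) (simp add: move_add_particle_same of_nat_add_particle \<beta>_def algebra_simps)
  also have "\<dots> = 0"
    by (rule sum_sum_symmetric_diff) (simp add: csym mult.commute)
  finally have new_particle_moves: "(\<Sum>a\<in>UNIV. \<beta> a * I a a) = 0" .
  have old_particle_moves: "(\<Sum>a\<in>UNIV. \<beta> a * (real (\<xi> x) * I a x))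
      = real (\<xi> x) * (\<Sum>y\<in>UNIV. c x y * (\<alpha> y + real (\<xi> y))
          * (particle_intertwiner \<alpha> g (move \<xi> x y) - particle_intertwiner \<alpha> g \<xi>))" for x
  proof (cases "\<xi> x = 0")
    case False
    have "(\<Sum>a\<in>UNIV. \<beta> a * (real (\<xi> x) * I a x))
        = real (\<xi> x) * (\<Sum>y\<in>UNIV. c x y * (\<Sum>a\<in>UNIV. \<beta> a * (\<alpha> y + real (add_particle \<xi> a y))
            * (g (move (add_particle \<xi> a) x y) - g (add_particle \<xi> a))))"
      unfolding I_def sum_distrib_left by (subst sum.swap) (simp add: sum_distrib_left mult_ac)
    moreover have "(\<Sum>a\<in>UNIV. \<beta> a * (\<alpha> y + real (add_particle \<xi> a y))
            * (g (move (add_particle \<xi> a) x y) - g (add_particle \<xi> a)))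
        = (\<alpha> y + real (\<xi> y)) * (particle_intertwiner \<alpha> g (move \<xi> x y) - particle_intertwiner \<alpha> g \<xi>)" for y
      unfolding \<beta>_def using False by (intro particle_intertwiner_move) simp
    ultimately show ?thesis
      by (simp add: mult.assoc)
  qed simp
  have "(\<Sum>a\<in>UNIV. \<beta> a * SIP_gen c \<alpha> g (add_particle \<xi> a))
      = (\<Sum>a\<in>UNIV. \<Sum>x\<in>UNIV. \<beta> a * (real (\<xi> x) * I a x))"
    unfolding gen_add_particle using new_particle_moves
    by (simp add: distrib_left sum.distrib sum_distrib_left)
  also have "\<dots> = (\<Sum>x\<in>UNIV. \<Sum>a\<in>UNIV. \<beta> a * (real (\<xi> x) * I a x))"
    by (rule sum.swap)
  also have "\<dots> = SIP_gen c \<alpha> (particle_intertwiner \<alpha> g) \<xi>"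
    unfolding old_particle_moves SIP_gen_def ..
  finally show ?thesis
    unfolding \<beta>_def ..
qed

lemma SIP_eigenfunction_particle_intertwiner:
  fixes c :: "'v::finite \<Rightarrow> 'v \<Rightarrow> real" and \<alpha> :: "'v \<Rightarrow> real"
  assumes csym: "\<And>x y. c x y = c y x"
    and eigen: "\<forall>\<eta>\<in>Xi (Suc j). - SIP_gen c \<alpha> G \<eta> = lam * G \<eta>" and "\<xi> \<in> Xi j"
  shows "- SIP_gen c \<alpha> (particle_intertwiner \<alpha> G) \<xi> = lam * particle_intertwiner \<alpha> G \<xi>"
proof -
  have "- SIP_gen c \<alpha> G (add_particle \<xi> a) = lam * G (add_particle \<xi> a)" for a
    using eigen add_particle_in_Xi[OF \<open>\<xi> \<in> Xi j\<close>] by blast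
  then have "SIP_gen c \<alpha> G (add_particle \<xi> a) = - (lam * G (add_particle \<xi> a))" for a
    by (simp add: minus_equation_iff)
  then show ?thesis
    unfolding SIP_gen_particle_intertwiner[OF csym] particle_intertwiner_def
    by (simp add: sum_distrib_left sum_negf[symmetric] mult_ac)
qed

section \<open>The lower bound\<close>

text \<open>\<open>pochhammer a n / fact n = \<Gamma>(a + n) / (\<Gamma>(a) n!)\<close>, so these are the unnormalised
  reversible weights \<open>\<mu>\<^sub>\<alpha>\<^sub>,\<^sub>k\<close>.\<close>
definition sip_weight :: "('v::finite \<Rightarrow> real) \<Rightarrow> ('v \<Rightarrow> nat) \<Rightarrow> real" where
  "sip_weight \<alpha> \<eta> = (\<Prod>x\<in>UNIV. pochhammer (\<alpha> x) (\<eta> x) / fact (\<eta> x))"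

lemma sip_weight_pos: "(\<And>x. 0 < \<alpha> x) \<Longrightarrow> 0 < sip_weight \<alpha> \<eta>"
  unfolding sip_weight_def by (intro prod_pos divide_pos_pos pochhammer_pos) auto

lemma sip_weight_add_particle:
  "real (Suc (\<xi> x)) * sip_weight \<alpha> (add_particle \<xi> x) = sip_weight \<alpha> \<xi> * (\<alpha> x + real (\<xi> x))"
proof -
  define P where "P = (\<Prod>z\<in>UNIV - {x}. pochhammer (\<alpha> z) (\<xi> z) / fact (\<xi> z))"
  have "sip_weight \<alpha> (add_particle \<xi> x) = pochhammer (\<alpha> x) (Suc (\<xi> x)) / fact (Suc (\<xi> x)) * P"
    unfolding sip_weight_def P_def
    by (subst prod.remove[of _ x]) (auto simp: add_particle_def intro!: prod.cong)
  moreover have "sip_weight \<alpha> \<xi> = pochhammer (\<alpha> x) (\<xi> x) / fact (\<xi> x) * P"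
    unfolding sip_weight_def P_def by (subst prod.remove[of _ x]) auto
  moreover have "real (Suc n) * (pochhammer a (Suc n) / fact (Suc n)) = pochhammer a n / fact n * (a + real n)"
    for a :: real and n
    unfolding pochhammer_Suc fact_Suc of_nat_mult by (simp add: field_simps del: of_nat_Suc)
  ultimately show ?thesis
    by (simp only: mult.assoc[symmetric]) (simp only: mult_ac)
qed

lemma sum_Xi_Suc_sip_weight_sq:
  fixes G :: "('v::finite \<Rightarrow> nat) \<Rightarrow> real"
  shows "real (Suc j) * (\<Sum>\<eta>\<in>Xi (Suc j). sip_weight \<alpha> \<eta> * (G \<eta>)\<^sup>2)
       = (\<Sum>\<xi>\<in>Xi j. sip_weight \<alpha> \<xi> * weighted_norm2 (\<lambda>x. \<alpha> x + real (\<xi> x)) (\<lambda>x. G (add_particle \<xi> x)))"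
proof -
  have "real (Suc j) * (\<Sum>\<eta>\<in>Xi (Suc j). sip_weight \<alpha> \<eta> * (G \<eta>)\<^sup>2)
      = (\<Sum>\<eta>\<in>Xi (Suc j). \<Sum>x\<in>UNIV. real (\<eta> x) * (sip_weight \<alpha> \<eta> * (G \<eta>)\<^sup>2))"
    unfolding sum_distrib_left
  proof (rule sum.cong[OF refl])
    fix \<eta> :: "'v \<Rightarrow> nat" assume "\<eta> \<in> Xi (Suc j)"
    then have "real (Suc j) = (\<Sum>x\<in>UNIV. real (\<eta> x))"
      unfolding Xi_def by (simp flip: of_nat_sum)
    then show "real (Suc j) * (sip_weight \<alpha> \<eta> * (G \<eta>)\<^sup>2) = (\<Sum>x\<in>UNIV. real (\<eta> x) * (sip_weight \<alpha> \<eta> * (G \<eta>)\<^sup>2))"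
      by (simp add: sum_distrib_right)
  qed
  also have "\<dots> = (\<Sum>\<xi>\<in>Xi j. \<Sum>x\<in>UNIV. (real (Suc (\<xi> x)) * sip_weight \<alpha> (add_particle \<xi> x)) * (G (add_particle \<xi> x))\<^sup>2)"
    unfolding sum_Xi_Suc_particles by (simp only: mult.assoc)
  also have "\<dots> = (\<Sum>\<xi>\<in>Xi j. sip_weight \<alpha> \<xi> * weighted_norm2 (\<lambda>x. \<alpha> x + real (\<xi> x)) (\<lambda>x. G (add_particle \<xi> x)))"
    unfolding sip_weight_add_particle weighted_norm2_def sum_distrib_left by (simp only: mult.assoc)
  finally show ?thesis .
qed

lemma sum_Xi_Suc_sip_weight_gen:
  fixes c :: "'v::finite \<Rightarrow> 'v \<Rightarrow> real" and G :: "('v \<Rightarrow> nat) \<Rightarrow> real"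
  assumes csym: "\<And>x y. c x y = c y x"
  shows "(\<Sum>\<eta>\<in>Xi (Suc j). sip_weight \<alpha> \<eta> * G \<eta> * SIP_gen c \<alpha> G \<eta>)
       = - (\<Sum>\<xi>\<in>Xi j. sip_weight \<alpha> \<xi> * dirichlet_form c (\<lambda>x. \<alpha> x + real (\<xi> x)) (\<lambda>x. G (add_particle \<xi> x)))"
proof -
  define S where "S \<eta> x = (\<Sum>y\<in>UNIV. c x y * (\<alpha> y + real (\<eta> y)) * (G (move \<eta> x y) - G \<eta>))" for \<eta> x
  have S_add_particle: "S (add_particle \<xi> x) x
      = (\<Sum>y\<in>UNIV. c x y * (\<alpha> y + real (\<xi> y)) * (G (add_particle \<xi> y) - G (add_particle \<xi> x)))" for \<xi> x
    unfolding S_def by (intro sum.cong) (auto simp: move_add_particle_same of_nat_add_particle)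
  have "(\<Sum>\<eta>\<in>Xi (Suc j). sip_weight \<alpha> \<eta> * G \<eta> * SIP_gen c \<alpha> G \<eta>)
      = (\<Sum>\<eta>\<in>Xi (Suc j). \<Sum>x\<in>UNIV. real (\<eta> x) * (sip_weight \<alpha> \<eta> * G \<eta> * S \<eta> x))"
    unfolding SIP_gen_def S_def sum_distrib_left by (intro sum.cong refl) (simp only: mult_ac)
  also have "\<dots> = (\<Sum>\<xi>\<in>Xi j. \<Sum>x\<in>UNIV. (real (Suc (\<xi> x)) * sip_weight \<alpha> (add_particle \<xi> x))
      * (G (add_particle \<xi> x) * S (add_particle \<xi> x) x))"
    unfolding sum_Xi_Suc_particles by (simp only: mult.assoc)
  also have "\<dots> = (\<Sum>\<xi>\<in>Xi j. sip_weight \<alpha> \<xi> * (\<Sum>x\<in>UNIV. \<Sum>y\<in>UNIV. (\<alpha> x + real (\<xi> x)) * (\<alpha> y + real (\<xi> y)) * c x y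
      * G (add_particle \<xi> x) * (G (add_particle \<xi> y) - G (add_particle \<xi> x))))"
    unfolding sip_weight_add_particle S_add_particle sum_distrib_left
    by (intro sum.cong refl) (simp only: mult_ac)
  also have "\<dots> = - (\<Sum>\<xi>\<in>Xi j. sip_weight \<alpha> \<xi> * dirichlet_form c (\<lambda>x. \<alpha> x + real (\<xi> x)) (\<lambda>x. G (add_particle \<xi> x)))"
    unfolding dirichlet_form_eq_neg_sum[OF csym] by (simp add: sum_negf)
  finally show ?thesis .
qed

lemma sum_Xi_sip_weight_sq_pos:
  fixes G :: "('v::finite \<Rightarrow> nat) \<Rightarrow> real"
  assumes "\<And>x. 0 < \<alpha> x" and "\<eta> \<in> Xi k" and "G \<eta> \<noteq> 0"
  shows "0 < (\<Sum>\<zeta>\<in>Xi k. sip_weight \<alpha> \<zeta> * (G \<zeta>)\<^sup>2)"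
proof -
  have weight_pos: "0 < sip_weight \<alpha> \<zeta>" for \<zeta>
    using assms(1) by (rule sip_weight_pos)
  then have "0 < sip_weight \<alpha> \<eta> * (G \<eta>)\<^sup>2"
    using assms(3) by simp
  also have "\<dots> \<le> (\<Sum>\<zeta>\<in>Xi k. sip_weight \<alpha> \<zeta> * (G \<zeta>)\<^sup>2)"
    using assms(2) weight_pos
    by (intro member_le_sum finite_Xi) (auto intro!: mult_nonneg_nonneg simp: less_imp_le)
  finally show ?thesis .
qed

lemma sum_Xi_sip_weight_eigenfunction:
  assumes "\<forall>\<eta>\<in>Xi k. - SIP_gen c \<alpha> G \<eta> = lam * G \<eta>"
  shows "(\<Sum>\<eta>\<in>Xi k. sip_weight \<alpha> \<eta> * G \<eta> * SIP_gen c \<alpha> G \<eta>)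
       = - (lam * (\<Sum>\<eta>\<in>Xi k. sip_weight \<alpha> \<eta> * (G \<eta>)\<^sup>2))"
proof -
  have "sip_weight \<alpha> \<eta> * G \<eta> * SIP_gen c \<alpha> G \<eta> = - (lam * (sip_weight \<alpha> \<eta> * (G \<eta>)\<^sup>2))"
    if "\<eta> \<in> Xi k" for \<eta>
  proof -
    have "SIP_gen c \<alpha> G \<eta> = - (lam * G \<eta>)"
      using assms that by (simp add: minus_equation_iff)
    then show ?thesis
      by (simp add: power2_eq_square mult_ac)
  qed
  then show ?thesis
    unfolding sum_distrib_left sum_negf[symmetric] by simp
qed

lemma poincare_shifted_weight:
  fixes c :: "'v::finite \<Rightarrow> 'v \<Rightarrow> real" and \<alpha> :: "'v \<Rightarrow> real"
  assumes cnn: "\<And>x y. 0 \<le> c x y" and age1: "\<And>x. 1 \<le> \<alpha> x" and "0 \<le> q"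
    and poincare: "\<And>h. weighted_sum \<alpha> h = 0 \<Longrightarrow> q * weighted_norm2 \<alpha> h \<le> dirichlet_form c \<alpha> h"
    and \<xi>_le: "\<And>x. \<xi> x \<le> j"
    and centred: "weighted_sum (\<lambda>x. \<alpha> x + real (\<xi> x)) h = 0"
  shows "q * weighted_norm2 (\<lambda>x. \<alpha> x + real (\<xi> x)) h
       \<le> real (Suc j) * dirichlet_form c (\<lambda>x. \<alpha> x + real (\<xi> x)) h"
proof -
  define \<beta> where "\<beta> x = \<alpha> x + real (\<xi> x)" for x
  have \<alpha>_nonneg: "0 \<le> \<alpha> x" for x
    using age1[of x] by simp
  define m where "m = - weighted_sum \<alpha> h / (\<Sum>x\<in>UNIV. \<alpha> x)"
  have "weighted_sum \<alpha> (\<lambda>x. h x + m * 1) = weighted_sum \<alpha> h + m * (\<Sum>x\<in>UNIV. \<alpha> x)"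
    unfolding weighted_sum_add_scaled by (simp add: weighted_sum_def)
  moreover have "0 < (\<Sum>x\<in>UNIV. \<alpha> x)"
    using age1 by (intro sum_pos) (auto intro: less_le_trans[OF zero_less_one])
  ultimately have shifted_centred: "weighted_sum \<alpha> (\<lambda>x. h x + m) = 0"
    unfolding m_def by simp
  have \<beta>_le: "\<beta> x \<le> real (Suc j) * \<alpha> x" for x
  proof -
    have "real (\<xi> x) \<le> real j * \<alpha> x"
      using \<xi>_le[of x] age1[of x] mult_left_mono[of 1 "\<alpha> x" "real j"] by simp
    then show ?thesis
      unfolding \<beta>_def by (simp add: algebra_simps)
  qed
  have "weighted_norm2 \<beta> h \<le> weighted_norm2 \<beta> (\<lambda>x. h x + m)"
    using centred \<alpha>_nonneg unfolding \<beta>_def by (intro weighted_norm2_le_shift) (auto intro: add_nonneg_nonneg)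
  also have "\<dots> \<le> real (Suc j) * weighted_norm2 \<alpha> (\<lambda>x. h x + m)"
    unfolding weighted_norm2_def sum_distrib_left mult.assoc[symmetric]
    by (intro sum_mono mult_right_mono \<beta>_le) simp
  finally have "q * weighted_norm2 \<beta> h \<le> real (Suc j) * (q * weighted_norm2 \<alpha> (\<lambda>x. h x + m))"
    using \<open>0 \<le> q\<close> by (simp add: mult_left_mono mult.left_commute)
  also have "\<dots> \<le> real (Suc j) * dirichlet_form c \<alpha> h"
    using poincare[OF shifted_centred] by (simp add: dirichlet_form_shift)
  also have "\<dots> \<le> real (Suc j) * dirichlet_form c \<beta> h"
    using cnn \<alpha>_nonneg by (intro mult_left_mono dirichlet_form_mono_weight) (auto simp: \<beta>_def)
  finally show ?thesis
    unfolding \<beta>_def .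
qed

lemma SIP_eigenvalue_ge_if_particle_intertwiner_vanishes:
  fixes c :: "'v::finite \<Rightarrow> 'v \<Rightarrow> real" and \<alpha> :: "'v \<Rightarrow> real"
  assumes csym: "\<And>x y. c x y = c y x" and cnn: "\<And>x y. 0 \<le> c x y"
    and age1: "\<And>x. 1 \<le> \<alpha> x" and "0 \<le> q"
    and poincare: "\<And>h. weighted_sum \<alpha> h = 0 \<Longrightarrow> q * weighted_norm2 \<alpha> h \<le> dirichlet_form c \<alpha> h"
    and eigen: "\<forall>\<eta>\<in>Xi (Suc j). - SIP_gen c \<alpha> G \<eta> = lam * G \<eta>"
    and nonzero: "\<exists>\<eta>\<in>Xi (Suc j). G \<eta> \<noteq> 0"
    and killed: "\<forall>\<xi>\<in>Xi j. particle_intertwiner \<alpha> G \<xi> = 0"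
  shows "q \<le> lam"
proof -
  define \<beta> where "\<beta> \<xi> x = \<alpha> x + real (\<xi> x)" for \<xi> :: "'v \<Rightarrow> nat" and x
  define h where "h \<xi> x = G (add_particle \<xi> x)" for \<xi> :: "'v \<Rightarrow> nat" and x
  define W where "W = (\<Sum>\<eta>\<in>Xi (Suc j). sip_weight \<alpha> \<eta> * (G \<eta>)\<^sup>2)"
  have apos: "0 < \<alpha> x" for x
    using age1[of x] by simp
  have weight_pos: "0 < sip_weight \<alpha> \<eta>" for \<eta>
    using apos by (rule sip_weight_pos)
  have "0 < W"
    unfolding W_def using nonzero sum_Xi_sip_weight_sq_pos[of \<alpha>, OF apos] by blast
  have energy: "lam * W = (\<Sum>\<xi>\<in>Xi j. sip_weight \<alpha> \<xi> * dirichlet_form c (\<beta> \<xi>) (h \<xi>))"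
    using sum_Xi_sip_weight_eigenfunction[OF eigen]
    unfolding sum_Xi_Suc_sip_weight_gen[OF csym] W_def \<beta>_def h_def by simp
  have norm: "real (Suc j) * W = (\<Sum>\<xi>\<in>Xi j. sip_weight \<alpha> \<xi> * weighted_norm2 (\<beta> \<xi>) (h \<xi>))"
    unfolding W_def sum_Xi_Suc_sip_weight_sq \<beta>_def h_def ..
  have local_poincare: "q * weighted_norm2 (\<beta> \<xi>) (h \<xi>) \<le> real (Suc j) * dirichlet_form c (\<beta> \<xi>) (h \<xi>)"
    if "\<xi> \<in> Xi j" for \<xi>
    unfolding \<beta>_def
  proof (rule poincare_shifted_weight[OF cnn age1 \<open>0 \<le> q\<close> poincare])
    show "\<xi> x \<le> j" for x
      using Xi_le[OF that] .
    show "weighted_sum (\<lambda>x. \<alpha> x + real (\<xi> x)) (h \<xi>) = 0"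
      using killed that unfolding weighted_sum_def particle_intertwiner_def h_def by blast
  qed
  have "real (Suc j) * (q * W) = q * (real (Suc j) * W)"
    by (simp only: mult_ac)
  also have "\<dots> = (\<Sum>\<xi>\<in>Xi j. sip_weight \<alpha> \<xi> * (q * weighted_norm2 (\<beta> \<xi>) (h \<xi>)))"
    unfolding norm sum_distrib_left by (simp only: mult_ac)
  also have "\<dots> \<le> (\<Sum>\<xi>\<in>Xi j. sip_weight \<alpha> \<xi> * (real (Suc j) * dirichlet_form c (\<beta> \<xi>) (h \<xi>)))"
    using local_poincare weight_pos by (intro sum_mono mult_left_mono) (auto intro: less_imp_le)
  also have "\<dots> = real (Suc j) * (lam * W)"
    unfolding energy sum_distrib_left by (simp only: mult_ac)
  finally show ?thesis
    using \<open>0 < W\<close> by simp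
qed

lemma SIP_eigenvalue_eq_0_if_gen_vanishes:
  assumes "\<And>G \<eta>. \<eta> \<in> Xi k \<Longrightarrow> SIP_gen c \<alpha> G \<eta> = 0" and "SIP_eigenvalue c \<alpha> k lam"
  shows "lam = 0"
  using assms unfolding SIP_eigenvalue_def by force

lemma SIP_gen_Xi_0: "\<eta> \<in> Xi 0 \<Longrightarrow> SIP_gen c \<alpha> G \<eta> = 0"
  using Xi_le[of \<eta> 0] by (simp add: SIP_gen_def)

lemma SIP_eigenvalue_ge_poincare_constant:
  fixes c :: "'v::finite \<Rightarrow> 'v \<Rightarrow> real" and \<alpha> :: "'v \<Rightarrow> real"
  assumes csym: "\<And>x y. c x y = c y x" and cnn: "\<And>x y. 0 \<le> c x y"
    and age1: "\<And>x. 1 \<le> \<alpha> x" and "0 \<le> q"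
    and poincare: "\<And>h. weighted_sum \<alpha> h = 0 \<Longrightarrow> q * weighted_norm2 \<alpha> h \<le> dirichlet_form c \<alpha> h"
    and "SIP_eigenvalue c \<alpha> k lam" and "lam \<noteq> 0"
  shows "q \<le> lam"
  using \<open>SIP_eigenvalue c \<alpha> k lam\<close> \<open>lam \<noteq> 0\<close>
proof (induction k arbitrary: lam)
  case 0
  then show ?case
    using SIP_eigenvalue_eq_0_if_gen_vanishes[OF SIP_gen_Xi_0] by blast
next
  case (Suc j)
  from \<open>SIP_eigenvalue c \<alpha> (Suc j) lam\<close> obtain G where nonzero: "\<exists>\<eta>\<in>Xi (Suc j). G \<eta> \<noteq> 0"
    and eigen: "\<forall>\<eta>\<in>Xi (Suc j). - SIP_gen c \<alpha> G \<eta> = lam * G \<eta>"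
    unfolding SIP_eigenvalue_def by blast
  show ?case
  proof (cases "\<forall>\<xi>\<in>Xi j. particle_intertwiner \<alpha> G \<xi> = 0")
    case True
    then show ?thesis
      using SIP_eigenvalue_ge_if_particle_intertwiner_vanishes[OF csym cnn age1 \<open>0 \<le> q\<close> poincare eigen nonzero]
      by blast
  next
    case False
    then have "SIP_eigenvalue c \<alpha> j lam"
      unfolding SIP_eigenvalue_def
      using SIP_eigenfunction_particle_intertwiner[OF csym eigen] by blast
    then show ?thesis
      using \<open>lam \<noteq> 0\<close> by (rule Suc.IH)
  qed
qed

section \<open>Identification of the gaps\<close>

lemma gap_eq_RW_eigenvalue:
  fixes c :: "'v::finite \<Rightarrow> 'v \<Rightarrow> real" and \<alpha> :: "'v \<Rightarrow> real"
  assumes csym: "\<And>x y. c x y = c y x" and cnn: "\<And>x y. 0 \<le> c x y"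
    and age1: "\<And>x. 1 \<le> \<alpha> x" and "0 < q"
    and "f x0 \<noteq> 0" and eigen: "\<And>x. RW_gen c \<alpha> f x = - q * f x"
    and poincare: "\<And>h. weighted_sum \<alpha> h = 0 \<Longrightarrow> q * weighted_norm2 \<alpha> h \<le> dirichlet_form c \<alpha> h"
    and "1 \<le> k"
  shows "gap c \<alpha> k = q"
  unfolding gap_def
proof (rule cInf_eq_minimum)
  show "q \<in> {lam. lam \<noteq> 0 \<and> SIP_eigenvalue c \<alpha> k lam}"
    using SIP_eigenvalue_of_RW_eigenfunction[OF csym \<open>1 \<le> k\<close> \<open>f x0 \<noteq> 0\<close> eigen] \<open>0 < q\<close> by simp
  show "q \<le> lam" if "lam \<in> {lam. lam \<noteq> 0 \<and> SIP_eigenvalue c \<alpha> k lam}" for lam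
    using that SIP_eigenvalue_ge_poincare_constant[OF csym cnn age1 less_imp_le[OF \<open>0 < q\<close>] poincare]
    by blast
qed

text \<open>\<open>Inf {}\<close> is an unspecified real: on a single vertex both gaps are this junk value.\<close>
lemma gap_single_vertex:
  fixes c :: "'v::finite \<Rightarrow> 'v \<Rightarrow> real"
  assumes "\<And>x y :: 'v. x = y"
  shows "gap c \<alpha> k = Inf {}"
proof -
  have "SIP_gen c \<alpha> G \<eta> = 0" for G \<eta>
  proof -
    have term_0: "real (\<eta> x) * (c x y * (\<alpha> y + real (\<eta> y)) * (G (move \<eta> x y) - G \<eta>)) = 0" for x y
      using assms[of y x] move_self[of \<eta> x] by (cases "\<eta> x = 0") auto
    show ?thesis
      unfolding SIP_gen_def sum_distrib_left by (simp only: term_0 sum.neutral_const)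
  qed
  then have "{lam. lam \<noteq> 0 \<and> SIP_eigenvalue c \<alpha> k lam} = {}"
    using SIP_eigenvalue_eq_0_if_gen_vanishes by blast
  then show ?thesis
    unfolding gap_def by (rule arg_cong[where f = Inf])
qed

lemma gap_eq_gap_RW:
  fixes c :: "'v::finite \<Rightarrow> 'v \<Rightarrow> real" and \<alpha> :: "'v \<Rightarrow> real"
  assumes graph: "weighted_graph c" and conn: "graph_connected c"
    and age1: "\<And>x. 1 \<le> \<alpha> x" and "1 \<le> k"
  shows "gap c \<alpha> k = gap_RW c \<alpha>"
proof (cases "\<exists>a b :: 'v. a \<noteq> b")
  case True
  then obtain a b :: 'v where "a \<noteq> b"
    by blast
  have csym: "\<And>x y. c x y = c y x" and cnn: "\<And>x y. 0 \<le> c x y"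
    using graph by (auto simp: weighted_graph_def)
  have apos: "\<And>x. 0 < \<alpha> x"
    using age1 by (auto intro: less_le_trans[OF zero_less_one])
  obtain q f x0 where "0 < q" and "f x0 \<noteq> 0" and eigen: "\<And>x. RW_gen c \<alpha> f x = - q * f x"
    and poincare: "\<And>h. weighted_sum \<alpha> h = 0 \<Longrightarrow> q * weighted_norm2 \<alpha> h \<le> dirichlet_form c \<alpha> h"
    using RW_spectral_gap[of c \<alpha>, OF graph conn apos \<open>a \<noteq> b\<close>] by blast
  have "gap c \<alpha> j = q" if "1 \<le> j" for j
    by (rule gap_eq_RW_eigenvalue[OF csym cnn age1 \<open>0 < q\<close> \<open>f x0 \<noteq> 0\<close> eigen poincare that])
  then show ?thesis
    unfolding gap_RW_def using \<open>1 \<le> k\<close> by simp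
next
  case False
  then have single_vertex: "\<And>x y :: 'v. x = y"
    by blast
  show ?thesis
    unfolding gap_RW_def gap_single_vertex[OF single_vertex] ..
qed

theorem corollary1p2:
  fixes c :: "'v::finite \<Rightarrow> 'v \<Rightarrow> real" and \<alpha> :: "'v \<Rightarrow> real"
  assumes "weighted_graph c" and "graph_connected c"
    and "\<forall>x. 0 < \<alpha> x" and "\<forall>x. 1 \<le> \<alpha> x"
  shows "gap_SIP c \<alpha> = gap_RW c \<alpha>"
proof -
  have "gap c \<alpha> k = gap_RW c \<alpha>" if "k \<in> {2..}" for k
    using gap_eq_gap_RW[OF assms(1,2)] assms(4) that by simp
  then have "gap_SIP c \<alpha> = (INF k\<in>{2::nat..}. gap_RW c \<alpha>)"
    unfolding gap_SIP_def by (rule INF_cong[OF refl])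
  also have "\<dots> = gap_RW c \<alpha>"
    by simp
  finally show ?thesis .
qed

end
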